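(* Let $\mu$ be an indeterminate admissible measure on $\mathbb{R}^d$ and let $\tau \neq 0$ be a positive measure of compact support on $\mathbb{R}^d$. Then the convolution $\tau \ast \mu$, defined by $\int f\, d(\tau\ast\mu)=\int\int f(x+y)\,d\tau(y)\,d\mu(x)$, is an admissible and indeterminate measure on $\mathbb{R}^d$.
   Context: An admissible measure on $\mathbb{R}^d$ is a positive Radon measure with all polynomials integrable; it is indeterminate if some distinct admissible measure has the same integrals against all polynomials. *)

theory Defs
  imports "HOL-Analysis.Analysis"
begin

text \<open>R^d is rendered as real^'n (d = CARD('n)). Monomial with multi-index alpha.\<close>

definition monomial :: "('n::finite \<Rightarrow> nat) \<Rightarrow> real^'n \<Rightarrow> real" where
  "monomial \<alpha> x = (\<Prod>i\<in>UNIV. (x $ i) ^ (\<alpha> i))"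

definition polynomial_fun :: "(real^'n::finite \<Rightarrow> real) \<Rightarrow> bool" where
  "polynomial_fun p \<longleftrightarrow>
     (\<exists>A c. finite A \<and> (\<forall>x. p x = (\<Sum>\<alpha>\<in>A. c \<alpha> * monomial \<alpha> x)))"

definition radon :: "(real^'n::finite) measure \<Rightarrow> bool" where
  "radon M \<longleftrightarrow> sets M = sets borel \<and> (\<forall>K. compact K \<longrightarrow> emeasure M K < \<infinity>)"

definition admissible :: "(real^'n::finite) measure \<Rightarrow> bool" where
  "admissible M \<longleftrightarrow> radon M \<and> (\<forall>p. polynomial_fun p \<longrightarrow> integrable M p)"

definition indeterminate :: "(real^'n::finite) measure \<Rightarrow> bool" where
  "indeterminate M \<longleftrightarrow> admissible M \<and>
     (\<exists>N. admissible N \<and> N \<noteq> M \<and>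
          (\<forall>p. polynomial_fun p \<longrightarrow> integral\<^sup>L N p = integral\<^sup>L M p))"

definition has_compact_support :: "(real^'n::finite) measure \<Rightarrow> bool" where
  "has_compact_support M \<longleftrightarrow> (\<exists>K. compact K \<and> emeasure M (UNIV - K) = 0)"

definition conv :: "(real^'n::finite) measure \<Rightarrow> (real^'n) measure \<Rightarrow> (real^'n) measure" where
  "conv \<tau> \<mu> = distr (\<tau> \<Otimes>\<^sub>M \<mu>) borel (\<lambda>(y, x). x + y)"

end

theory Submission
  imports Defs
begin

text \<open>Let \<open>\<nu> \<noteq> \<mu>\<close> be admissible with the moments of \<open>\<mu>\<close>. Polynomials stay polynomials under
  translation, so for every Borel set \<open>A\<close> the measure \<open>(\<tau>|\<^bsub>-A\<^esub>) * \<mu> + (\<tau>|\<^bsub>A\<^esub>) * \<nu>\<close> is admissible with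
  the moments of \<open>\<tau> * \<mu>\<close>, so it would equal \<open>\<tau> * \<mu>\<close> if \<open>\<tau> * \<mu>\<close> were determinate. Then for a bounded
  Lipschitz \<open>g\<close> the function \<open>D y = \<integral> g(x + y - y0) d(\<nu> - \<mu>)(x)\<close> is Lipschitz and has vanishing
  \<open>\<tau>\<close>-integral over every ball around \<open>y0\<close>. Choosing \<open>y0\<close> so that \<open>\<tau>\<close> charges all these balls forces
  \<open>D y0 = \<integral> g d\<nu> - \<integral> g d\<mu> = 0\<close>, and bounded Lipschitz functions separate finite Borel measures,
  so \<open>\<mu> = \<nu>\<close>.\<close>

section \<open>Polynomial functions\<close>

lemma monomial_add_exponents:
  "monomial \<alpha> x * monomial \<beta> x = monomial (\<lambda>i. \<alpha> i + \<beta> i) x"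
  unfolding monomial_def by (simp add: power_add prod.distrib)

lemma polynomial_fun_monomial: "polynomial_fun (\<lambda>x. c * monomial \<alpha> x)"
  unfolding polynomial_fun_def by (intro exI[of _ "{\<alpha>}"] exI[of _ "\<lambda>_. c"]) simp

lemma polynomial_fun_const: "polynomial_fun (\<lambda>x. c)"
  using polynomial_fun_monomial[of c "\<lambda>_. 0"] by (simp add: monomial_def)

lemma polynomial_fun_component: "polynomial_fun (\<lambda>x::real^'n::finite. x $ i)"
proof -
  have "x $ i = 1 * monomial (\<lambda>j. if j = i then 1 else 0) x" for x :: "real^'n"
    unfolding monomial_def by (simp add: if_distrib prod.delta' cong: if_cong)
  then show ?thesis
    using polynomial_fun_monomial[of 1 "\<lambda>j. if j = i then 1 else 0"] by simp
qed

lemma polynomial_fun_add: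
  assumes "polynomial_fun p" "polynomial_fun q"
  shows "polynomial_fun (\<lambda>x. p x + q x)"
proof -
  obtain A c where A: "finite A" "\<And>x. p x = (\<Sum>\<alpha>\<in>A. c \<alpha> * monomial \<alpha> x)"
    using assms(1) unfolding polynomial_fun_def by blast
  obtain B d where B: "finite B" "\<And>x. q x = (\<Sum>\<alpha>\<in>B. d \<alpha> * monomial \<alpha> x)"
    using assms(2) unfolding polynomial_fun_def by blast
  define e where "e \<alpha> = (if \<alpha> \<in> A then c \<alpha> else 0) + (if \<alpha> \<in> B then d \<alpha> else 0)" for \<alpha>
  have "p x + q x = (\<Sum>\<alpha>\<in>A \<union> B. e \<alpha> * monomial \<alpha> x)" for x
  proof -
    have "p x = (\<Sum>\<alpha>\<in>A \<union> B. (if \<alpha> \<in> A then c \<alpha> else 0) * monomial \<alpha> x)"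
      unfolding A(2) using A(1) B(1) by (intro sum.mono_neutral_cong_left) auto
    moreover have "q x = (\<Sum>\<alpha>\<in>A \<union> B. (if \<alpha> \<in> B then d \<alpha> else 0) * monomial \<alpha> x)"
      unfolding B(2) using A(1) B(1) by (intro sum.mono_neutral_cong_left) auto
    ultimately show ?thesis
      unfolding e_def by (simp only: distrib_right sum.distrib)
  qed
  then show ?thesis
    using A(1) B(1) unfolding polynomial_fun_def by (intro exI[of _ "A \<union> B"] exI[of _ e]) simp
qed

lemma polynomial_fun_sum:
  assumes "finite S" "\<And>s. s \<in> S \<Longrightarrow> polynomial_fun (f s)"
  shows "polynomial_fun (\<lambda>x. \<Sum>s\<in>S. f s x)"
  using assms by (induction S rule: finite_induct) (auto intro: polynomial_fun_add polynomial_fun_const)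

lemma polynomial_fun_mult:
  assumes "polynomial_fun p" "polynomial_fun q"
  shows "polynomial_fun (\<lambda>x. p x * q x)"
proof -
  obtain A c where A: "finite A" "\<And>x. p x = (\<Sum>\<alpha>\<in>A. c \<alpha> * monomial \<alpha> x)"
    using assms(1) unfolding polynomial_fun_def by blast
  obtain B d where B: "finite B" "\<And>x. q x = (\<Sum>\<alpha>\<in>B. d \<alpha> * monomial \<alpha> x)"
    using assms(2) unfolding polynomial_fun_def by blast
  have "p x * q x = (\<Sum>\<alpha>\<in>A. \<Sum>\<beta>\<in>B. (c \<alpha> * d \<beta>) * monomial (\<lambda>i. \<alpha> i + \<beta> i) x)" for x
    unfolding A(2) B(2) sum_product monomial_add_exponents[symmetric]
    by (simp add: mult_ac)
  then show ?thesis
    using A(1) B(1) by (simp add: polynomial_fun_sum polynomial_fun_monomial)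
qed

lemma polynomial_fun_prod:
  assumes "finite S" "\<And>s. s \<in> S \<Longrightarrow> polynomial_fun (f s)"
  shows "polynomial_fun (\<lambda>x. \<Prod>s\<in>S. f s x)"
  using assms by (induction S rule: finite_induct) (auto intro: polynomial_fun_mult polynomial_fun_const)

lemma polynomial_fun_power:
  assumes "polynomial_fun p"
  shows "polynomial_fun (\<lambda>x. p x ^ k)"
  using assms by (induction k) (auto intro: polynomial_fun_mult polynomial_fun_const)

lemma polynomial_fun_translate:
  fixes p :: "real^'n::finite \<Rightarrow> real"
  assumes "polynomial_fun p"
  shows "polynomial_fun (\<lambda>x. p (x + y))"
proof -
  obtain A c where A: "finite A" "\<And>x. p x = (\<Sum>\<alpha>\<in>A. c \<alpha> * monomial \<alpha> x)"
    using assms unfolding polynomial_fun_def by blast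
  have "polynomial_fun (\<lambda>x. monomial \<alpha> (x + y))" for \<alpha>
    unfolding monomial_def vector_add_component
    by (intro polynomial_fun_prod polynomial_fun_power polynomial_fun_add
        polynomial_fun_component polynomial_fun_const) simp
  then show ?thesis
    unfolding A(2) using A(1) by (intro polynomial_fun_sum polynomial_fun_mult polynomial_fun_const)
qed

lemma continuous_on_polynomial_fun:
  assumes "polynomial_fun p"
  shows "continuous_on UNIV p"
proof -
  obtain A c where A: "finite A" "\<And>x. p x = (\<Sum>\<alpha>\<in>A. c \<alpha> * monomial \<alpha> x)"
    using assms unfolding polynomial_fun_def by blast
  have "continuous_on UNIV (\<lambda>x::real^'a. \<Sum>\<alpha>\<in>A. c \<alpha> * (\<Prod>i\<in>UNIV. (x $ i) ^ \<alpha> i))"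
    by (intro continuous_intros)
  moreover have "p = (\<lambda>x. \<Sum>\<alpha>\<in>A. c \<alpha> * (\<Prod>i\<in>UNIV. (x $ i) ^ \<alpha> i))"
    using A(2) unfolding monomial_def by (simp add: fun_eq_iff)
  ultimately show ?thesis by simp
qed

lemma borel_measurable_polynomial_fun:
  "polynomial_fun p \<Longrightarrow> p \<in> borel_measurable borel"
  by (intro borel_measurable_continuous_onI continuous_on_polynomial_fun)

lemma polynomial_fun_translate_dominated:
  fixes p :: "real^'n::finite \<Rightarrow> real"
  assumes "polynomial_fun p" "compact K"
  obtains q where "polynomial_fun q" "\<And>x y. y \<in> K \<Longrightarrow> \<bar>p (x + y)\<bar> \<le> q x"
proof -
  obtain A c where A: "finite A" "\<And>x. p x = (\<Sum>\<alpha>\<in>A. c \<alpha> * monomial \<alpha> x)"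
    using assms(1) unfolding polynomial_fun_def by blast
  obtain R where R: "\<And>y. y \<in> K \<Longrightarrow> norm y \<le> R"
    using compact_imp_bounded[OF assms(2)] bounded_iff by blast
  define B where "B x = 1 + R + (\<Sum>i\<in>UNIV. (x $ i)\<^sup>2)" for x :: "real^'n"
  define q where "q x = (\<Sum>\<alpha>\<in>A. \<bar>c \<alpha>\<bar> * (\<Prod>i\<in>UNIV. B x ^ \<alpha> i))" for x
  have "polynomial_fun B"
    unfolding B_def by (intro polynomial_fun_add polynomial_fun_const polynomial_fun_sum
        polynomial_fun_power polynomial_fun_component) simp
  then have "polynomial_fun q"
    unfolding q_def using A(1)
    by (intro polynomial_fun_sum polynomial_fun_mult polynomial_fun_const polynomial_fun_prod
        polynomial_fun_power) auto
  moreover have "\<bar>p (x + y)\<bar> \<le> q x" if "y \<in> K" for x y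
  proof -
    have component_bound: "\<bar>(x + y) $ i\<bar> \<le> B x" for i
    proof -
      have "\<bar>y $ i\<bar> \<le> R" using R[OF that] component_le_norm_cart[of y i] by linarith
      moreover have "\<bar>x $ i\<bar> \<le> 1 + (x $ i)\<^sup>2"
        using zero_le_power2[of "\<bar>x $ i\<bar> - 1"] by (simp add: power2_eq_square algebra_simps)
      moreover have "(x $ i)\<^sup>2 \<le> (\<Sum>j\<in>UNIV. (x $ j)\<^sup>2)" by (rule member_le_sum) auto
      ultimately show ?thesis unfolding B_def vector_add_component by linarith
    qed
    have "\<bar>p (x + y)\<bar> \<le> (\<Sum>\<alpha>\<in>A. \<bar>c \<alpha>\<bar> * \<bar>monomial \<alpha> (x + y)\<bar>)"
      unfolding A(2) abs_mult[symmetric] by (rule sum_abs)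
    also have "\<dots> \<le> q x"
      unfolding q_def monomial_def abs_prod power_abs
      by (intro sum_mono mult_left_mono prod_mono conjI power_mono component_bound) auto
    finally show ?thesis .
  qed
  ultimately show ?thesis using that by blast
qed

lemma finite_measure_if_admissible:
  assumes "admissible M"
  shows "finite_measure M"
proof (rule finite_measureI)
  have "integrable M (\<lambda>_. 1::real)"
    using assms polynomial_fun_const unfolding admissible_def by blast
  then have "(\<integral>\<^sup>+ x. ennreal (norm (1::real)) \<partial>M) < \<infinity>"
    unfolding integrable_iff_bounded by blast
  then show "emeasure M (space M) \<noteq> \<infinity>"
    by (simp add: nn_integral_const)
qed

lemma radon_if_finite_measure:
  "finite_measure M \<Longrightarrow> sets M = sets borel \<Longrightarrow> radon M"
  unfolding radon_def using finite_measure.emeasure_finite[of M] by (simp add: less_top)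

lemma compact_supportE:
  assumes "radon \<tau>" "has_compact_support \<tau>"
  obtains K where "compact K" "AE y in \<tau>. y \<in> K"
proof -
  obtain K where K: "compact K" "emeasure \<tau> (UNIV - K) = 0"
    using assms(2) unfolding has_compact_support_def by blast
  have "UNIV - K \<in> null_sets \<tau>"
    using assms(1) K by (auto simp: radon_def null_sets_def compact_imp_closed)
  then have "AE y in \<tau>. y \<in> K"
    by (rule AE_I') auto
  with K(1) show ?thesis by (rule that)
qed

lemma finite_measure_if_compact_support:
  assumes "radon \<tau>" "has_compact_support \<tau>"
  shows "finite_measure \<tau>"
proof (rule finite_measureI)
  obtain K where K: "compact K" "AE y in \<tau>. y \<in> K"
    using assms by (rule compact_supportE)
  have sets: "K \<in> sets \<tau>" "space \<tau> \<in> sets \<tau>"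
    using assms(1) K(1) by (auto simp: radon_def compact_imp_closed)
  have "emeasure \<tau> (space \<tau>) = emeasure \<tau> K"
    using K(2) sets by (intro emeasure_eq_AE) auto
  also have "\<dots> < \<infinity>"
    using assms(1) K(1) by (simp add: radon_def)
  finally show "emeasure \<tau> (space \<tau>) \<noteq> \<infinity>" by simp
qed

lemma measure_space_pos_if_neq:
  assumes "finite_measure M" "finite_measure N" "sets M = sets N"
    and "measure N (space N) = measure M (space M)" "M \<noteq> N"
  shows "measure M (space M) > 0"
proof (rule ccontr)
  assume "\<not> measure M (space M) > 0"
  then have "measure M (space M) = 0" "measure N (space N) = 0"
    using measure_nonneg[of M "space M"] assms(4) by linarith+
  then have null: "emeasure M (space M) = 0" "emeasure N (space N) = 0"
    using assms(1,2) by (simp_all add: finite_measure.emeasure_eq_measure)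
  have "M = N"
  proof (rule measure_eqI)
    show "emeasure M X = emeasure N X" if "X \<in> sets M" for X
      using that assms(3) null emeasure_space[of M X] emeasure_space[of N X] by simp
  qed fact
  with assms(5) show False ..
qed

lemma support_pointE:
  fixes \<tau> :: "'a::metric_space measure"
  assumes sets: "sets \<tau> = sets borel" and "compact K" "AE y in \<tau>. y \<in> K"
    and "emeasure \<tau> (space \<tau>) \<noteq> 0"
  obtains y0 where "\<And>r. r > 0 \<Longrightarrow> emeasure \<tau> (ball y0 r) \<noteq> 0"
proof -
  have "\<exists>y0. \<forall>r>0. emeasure \<tau> (ball y0 r) \<noteq> 0"
  proof (rule ccontr)
    assume "\<nexists>y0. \<forall>r>0. emeasure \<tau> (ball y0 r) \<noteq> 0"
    then obtain r where r: "\<And>y. r y > 0" "\<And>y. emeasure \<tau> (ball y (r y)) = 0"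
      by metis
    have cover: "K \<subseteq> (\<Union>y\<in>K. ball y (r y))"
      using r(1) by auto
    have "\<exists>C. C \<subseteq> K \<and> finite C \<and> K \<subseteq> (\<Union>y\<in>C. ball y (r y))"
      by (rule compactE_image[OF assms(2) _ cover]) auto
    then obtain C where C: "finite C" "K \<subseteq> (\<Union>y\<in>C. ball y (r y))"
      by blast
    have "(\<Union>y\<in>C. ball y (r y)) \<in> null_sets \<tau>"
      using C(1) r(2) sets by (intro null_sets_UN') (auto simp: countable_finite null_sets_def)
    then have "AE y in \<tau>. y \<notin> (\<Union>y\<in>C. ball y (r y))"
      by (rule AE_not_in)
    with assms(3) have "AE y in \<tau>. False"
      by eventually_elim (use C(2) in blast)
    with assms(4) show False
      by (simp add: eventually_False ae_filter_eq_bot_iff)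
  qed
  then show ?thesis
    using that by blast
qed

lemma measurable_pair_plus:
  assumes "sets M1 = sets (borel :: 'a::euclidean_space measure)" "sets M2 = sets (borel :: 'a measure)"
  shows "(\<lambda>(y, x). x + y) \<in> M1 \<Otimes>\<^sub>M M2 \<rightarrow>\<^sub>M (borel :: 'a measure)"
  unfolding measurable_cong_sets[OF sets_pair_measure_cong[OF assms] refl] by measurable

lemma finite_measure_density_const:
  "finite_measure M \<Longrightarrow> finite_measure (density M (\<lambda>_. ennreal c))"
  by (intro finite_measureI)
    (simp add: emeasure_density nn_integral_cmult_indicator ennreal_mult_eq_top_iff
      finite_measure.emeasure_finite)

lemma has_bochner_integral_density_const:
  fixes g :: "'a \<Rightarrow> real"
  assumes "c \<ge> 0" "integrable M g"
  shows "has_bochner_integral (density M (\<lambda>_. ennreal c)) g (c * integral\<^sup>L M g)"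
proof -
  have "integrable (density M (\<lambda>_. ennreal c)) g"
    using assms by (subst integrable_density[where g="\<lambda>_. c"]) auto
  moreover have "integral\<^sup>L (density M (\<lambda>_. ennreal c)) g = c * integral\<^sup>L M g"
    using assms by (subst integral_density[where g="\<lambda>_. c"]) auto
  ultimately show ?thesis
    by (simp add: has_bochner_integral_iff)
qed

lemma AE_pair_measure_fst:
  assumes "sigma_finite_measure M2" "AE x in M1. P x"
  shows "AE z in M1 \<Otimes>\<^sub>M M2. P (fst z)"
proof -
  interpret M2: sigma_finite_measure M2 by fact
  obtain N where N: "{x \<in> space M1. \<not> P x} \<subseteq> N" "emeasure M1 N = 0" "N \<in> sets M1"
    using assms(2) by (rule AE_E)
  have "N \<times> space M2 \<in> null_sets (M1 \<Otimes>\<^sub>M M2)"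
    using N(2,3) by (simp add: null_sets_def M2.emeasure_pair_measure_Times)
  then show ?thesis
    by (rule AE_I') (use N(1) in \<open>auto simp: space_pair_measure\<close>)
qed

lemma has_bochner_integral_pair_snd:
  fixes h :: "'b \<Rightarrow> real"
  assumes "finite_measure M1" "finite_measure M2" "integrable M2 h"
  shows "has_bochner_integral (M1 \<Otimes>\<^sub>M M2) (\<lambda>z. h (snd z)) (measure M1 (space M1) * integral\<^sup>L M2 h)"
proof -
  interpret M1: finite_measure M1 by fact
  interpret M2: finite_measure M2 by fact
  interpret pair_sigma_finite M1 M2 ..
  have [measurable]: "h \<in> borel_measurable M2"
    using assms(3) by blast
  have int: "integrable (M1 \<Otimes>\<^sub>M M2) (\<lambda>z. h (snd z))"
    by (rule Fubini_integrable) (use assms(3) in auto)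
  then show ?thesis
    using integral_fst'[OF int] by (simp add: has_bochner_integral_iff)
qed

lemma has_bochner_integral_pair_fst:
  fixes h :: "'a \<Rightarrow> real"
  assumes "finite_measure M1" "finite_measure M2" "integrable M1 h"
  shows "has_bochner_integral (M1 \<Otimes>\<^sub>M M2) (\<lambda>z. h (fst z)) (measure M2 (space M2) * integral\<^sup>L M1 h)"
proof -
  interpret M1: finite_measure M1 by fact
  interpret M2: finite_measure M2 by fact
  interpret pair_sigma_finite M1 M2 ..
  have [measurable]: "h \<in> borel_measurable M1"
    using assms(3) by blast
  have int: "integrable (M1 \<Otimes>\<^sub>M M2) (\<lambda>z. h (fst z))"
    by (rule Fubini_integrable) (use assms(3) in auto)
  then show ?thesis
    using integral_fst'[OF int] by (simp add: has_bochner_integral_iff mult.commute)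
qed

lemma has_bochner_integral_pair_normalized:
  fixes h :: "'a \<Rightarrow> real"
  assumes fin: "finite_measure \<mu>" "finite_measure \<nu>"
    and mass: "measure \<nu> (space \<nu>) = measure \<mu> (space \<mu>)" "measure \<mu> (space \<mu>) > 0"
  defines "Q \<equiv> density \<nu> (\<lambda>_. ennreal (1 / measure \<mu> (space \<mu>)))"
  shows "finite_measure (\<mu> \<Otimes>\<^sub>M Q)"
    and "integrable \<mu> h \<Longrightarrow> has_bochner_integral (\<mu> \<Otimes>\<^sub>M Q) (\<lambda>w. h (fst w)) (integral\<^sup>L \<mu> h)"
    and "integrable \<nu> h \<Longrightarrow> has_bochner_integral (\<mu> \<Otimes>\<^sub>M Q) (\<lambda>w. h (snd w)) (integral\<^sup>L \<nu> h)"
proof -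
  define m where "m = measure \<mu> (space \<mu>)"
  have Q_fin: "finite_measure Q"
    unfolding Q_def using fin(2) by (rule finite_measure_density_const)
  have Q_int: "has_bochner_integral Q g (integral\<^sup>L \<nu> g / m)" if "integrable \<nu> g" for g :: "'a \<Rightarrow> real"
    using has_bochner_integral_density_const[OF _ that, of "1 / m"] mass(2) by (simp add: Q_def m_def)
  have Q_mass: "measure Q (space Q) = 1"
    using has_bochner_integral_integral_eq[OF Q_int[OF finite_measure.integrable_const[OF fin(2), of "1::real"]]]
      mass by (simp add: m_def)
  show "finite_measure (\<mu> \<Otimes>\<^sub>M Q)"
    using Q_fin fin(1) by (rule finite_measure_pair_measure)
  show "has_bochner_integral (\<mu> \<Otimes>\<^sub>M Q) (\<lambda>w. h (fst w)) (integral\<^sup>L \<mu> h)" if "integrable \<mu> h"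
    using has_bochner_integral_pair_fst[OF fin(1) Q_fin that] Q_mass by simp
  show "has_bochner_integral (\<mu> \<Otimes>\<^sub>M Q) (\<lambda>w. h (snd w)) (integral\<^sup>L \<nu> h)" if "integrable \<nu> h"
    using has_bochner_integral_pair_snd[OF fin(1) Q_fin integrable.intros[OF Q_int[OF that]]]
      has_bochner_integral_integral_eq[OF Q_int[OF that]] mass(2)
    by (simp add: m_def)
qed

lemma integral_distr_pair_dominated:
  fixes \<tau> :: "'a measure" and R :: "'b measure" and f :: "'c \<Rightarrow> real"
  assumes "finite_measure \<tau>" "finite_measure R"
    and G: "G \<in> \<tau> \<Otimes>\<^sub>M R \<rightarrow>\<^sub>M N" and f: "f \<in> borel_measurable N"
    and h: "integrable R h"
    and bound: "AE y in \<tau>. \<forall>w\<in>space R. \<bar>f (G (y, w))\<bar> \<le> h w"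
  shows "integrable (distr (\<tau> \<Otimes>\<^sub>M R) N G) f"
    and "integral\<^sup>L (distr (\<tau> \<Otimes>\<^sub>M R) N G) f = (\<integral>y. (\<integral>w. f (G (y, w)) \<partial>R) \<partial>\<tau>)"
    and "integrable \<tau> (\<lambda>y. \<integral>w. f (G (y, w)) \<partial>R)"
proof -
  interpret \<tau>: finite_measure \<tau> by fact
  interpret R: finite_measure R by fact
  interpret pair_sigma_finite \<tau> R ..
  have fG: "(\<lambda>z. f (G z)) \<in> borel_measurable (\<tau> \<Otimes>\<^sub>M R)"
    using G f by measurable
  have dominated: "AE z in \<tau> \<Otimes>\<^sub>M R. norm (f (G z)) \<le> norm (h (snd z))"
    using AE_pair_measure_fst[OF R.sigma_finite_measure_axioms bound] AE_space
    by eventually_elim (auto simp: space_pair_measure split_beta)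
  have int: "integrable (\<tau> \<Otimes>\<^sub>M R) (\<lambda>z. f (G z))"
    using integrable.intros[OF has_bochner_integral_pair_snd[OF assms(1,2) h]] fG dominated
    by (rule Bochner_Integration.integrable_bound)
  then show "integrable (distr (\<tau> \<Otimes>\<^sub>M R) N G) f"
    by (simp add: integrable_distr_eq[OF G f])
  show "integral\<^sup>L (distr (\<tau> \<Otimes>\<^sub>M R) N G) f = (\<integral>y. (\<integral>w. f (G (y, w)) \<partial>R) \<partial>\<tau>)"
    using integral_distr[OF G f] integral_fst'[OF int] by simp
  show "integrable \<tau> (\<lambda>y. \<integral>w. f (G (y, w)) \<partial>R)"
    using integrable_fst'[OF int] by simp
qed

section \<open>Convolution with a compactly supported measure\<close>

lemma integrable_translate_dominated:
  fixes f q :: "'a::euclidean_space \<Rightarrow> real"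
  assumes "sets M = sets borel" "f \<in> borel_measurable borel" "integrable M q"
    and "\<And>x. \<bar>f (x + y)\<bar> \<le> q x"
  shows "integrable M (\<lambda>x. f (x + y))"
proof (rule Bochner_Integration.integrable_bound[OF assms(3)])
  show "(\<lambda>x. f (x + y)) \<in> borel_measurable M"
    unfolding measurable_cong_sets[OF assms(1) refl] using assms(2) by measurable
  show "AE x in M. norm (f (x + y)) \<le> norm (q x)"
    using assms(4) by (intro AE_I2) (auto intro: order_trans[OF _ abs_ge_self])
qed

lemma integral_conv:
  fixes \<tau> \<mu> :: "(real^'n::finite) measure" and f q :: "real^'n \<Rightarrow> real"
  assumes "finite_measure \<tau>" "finite_measure \<mu>" "sets \<tau> = sets borel" "sets \<mu> = sets borel"
    and f: "f \<in> borel_measurable borel" and q: "integrable \<mu> q"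
    and bound: "AE y in \<tau>. \<forall>x. \<bar>f (x + y)\<bar> \<le> q x"
  shows "integrable (conv \<tau> \<mu>) f"
    and "integral\<^sup>L (conv \<tau> \<mu>) f = (\<integral>y. (\<integral>x. f (x + y) \<partial>\<mu>) \<partial>\<tau>)"
    and "integrable \<tau> (\<lambda>y. \<integral>x. f (x + y) \<partial>\<mu>)"
proof -
  have "AE y in \<tau>. \<forall>x\<in>space \<mu>. \<bar>f ((\<lambda>(y, x). x + y) (y, x))\<bar> \<le> q x"
    using bound by eventually_elim simp
  note * = integral_distr_pair_dominated[OF assms(1,2) measurable_pair_plus[OF assms(3,4)] f q this]
  show "integrable (conv \<tau> \<mu>) f"
    using *(1) unfolding conv_def .
  show "integral\<^sup>L (conv \<tau> \<mu>) f = (\<integral>y. (\<integral>x. f (x + y) \<partial>\<mu>) \<partial>\<tau>)"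
    using *(2) unfolding conv_def by simp
  show "integrable \<tau> (\<lambda>y. \<integral>x. f (x + y) \<partial>\<mu>)"
    using *(3) by simp
qed

lemma polynomial_translates_dominated:
  fixes p :: "real^'n::finite \<Rightarrow> real"
  assumes "radon \<tau>" "has_compact_support \<tau>" "polynomial_fun p"
  obtains q where "polynomial_fun q" "AE y in \<tau>. \<forall>x. \<bar>p (x + y)\<bar> \<le> q x"
proof -
  obtain K where K: "compact K" "AE y in \<tau>. y \<in> K"
    using assms(1,2) by (rule compact_supportE)
  obtain q where q: "polynomial_fun q" "\<And>x y. y \<in> K \<Longrightarrow> \<bar>p (x + y)\<bar> \<le> q x"
    using polynomial_fun_translate_dominated[OF assms(3) K(1)] by blast
  from K(2) have "AE y in \<tau>. \<forall>x. \<bar>p (x + y)\<bar> \<le> q x"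
    by eventually_elim (simp add: q(2))
  with q(1) show ?thesis by (rule that)
qed

lemma admissible_conv:
  assumes \<mu>: "admissible \<mu>" and \<tau>: "radon \<tau>" "has_compact_support \<tau>"
  shows "admissible (conv \<tau> \<mu>)"
proof -
  note fin = finite_measure_if_compact_support[OF \<tau>] finite_measure_if_admissible[OF \<mu>]
  have sets: "sets \<tau> = sets borel" "sets \<mu> = sets borel"
    using \<tau>(1) \<mu> by (simp_all add: admissible_def radon_def)
  have "finite_measure (conv \<tau> \<mu>)"
    unfolding conv_def
    by (intro finite_measure.finite_measure_distr finite_measure_pair_measure fin
        measurable_pair_plus sets)
  then have "radon (conv \<tau> \<mu>)"
    by (rule radon_if_finite_measure) (simp add: conv_def)
  moreover have "integrable (conv \<tau> \<mu>) p" if p: "polynomial_fun p" for p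
  proof -
    obtain q where q: "polynomial_fun q" "AE y in \<tau>. \<forall>x. \<bar>p (x + y)\<bar> \<le> q x"
      using \<tau> p by (rule polynomial_translates_dominated)
    have "integrable \<mu> q"
      using \<mu> q(1) by (simp add: admissible_def)
    with q(2) show ?thesis
      by (intro integral_conv(1)[OF fin sets borel_measurable_polynomial_fun[OF p]])
  qed
  ultimately show ?thesis
    unfolding admissible_def by blast
qed

section \<open>Swapping the convolved measure over part of the kernel\<close>

text \<open>The measure \<open>(\<tau>|\<^bsub>-A\<^esub>) * \<mu> + (\<tau>|\<^bsub>A\<^esub>) * \<nu>\<close>, written as one image measure. When \<open>\<mu>\<close> and \<open>\<nu>\<close>
  have the same total mass, the density turns the unused coordinate into a probability factor.\<close>

definition mixed_conv ::
  "(real^'n::finite) measure \<Rightarrow> (real^'n) set \<Rightarrow> (real^'n) measure \<Rightarrow> (real^'n) measure \<Rightarrow> (real^'n) measure"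
  where "mixed_conv \<tau> A \<mu> \<nu> =
    distr (\<tau> \<Otimes>\<^sub>M (\<mu> \<Otimes>\<^sub>M density \<nu> (\<lambda>_. ennreal (1 / measure \<mu> (space \<mu>))))) borel
      (\<lambda>(y, x, x'). if y \<in> A then x' + y else x + y)"

lemma measurable_mixed_plus:
  assumes "A \<in> sets borel" "sets M1 = sets (borel :: 'a::euclidean_space measure)"
    "sets M2 = sets (borel :: 'a measure)" "sets M3 = sets (borel :: 'a measure)"
  shows "(\<lambda>(y, x, x'). if y \<in> A then x' + y else x + y) \<in> M1 \<Otimes>\<^sub>M (M2 \<Otimes>\<^sub>M M3) \<rightarrow>\<^sub>M (borel :: 'a measure)"
proof -
  have [measurable]: "A \<in> sets borel" by fact
  have "(\<lambda>(y, x, x'). if y \<in> A then x' + y else x + y) \<in> (borel :: 'a measure) \<Otimes>\<^sub>M (borel \<Otimes>\<^sub>M borel) \<rightarrow>\<^sub>M borel"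
    by measurable
  then show ?thesis
    unfolding measurable_cong_sets[OF sets_pair_measure_cong[OF assms(2) sets_pair_measure_cong[OF assms(3,4)]] refl] .
qed

lemma integral_mixed_conv:
  fixes \<tau> \<mu> \<nu> :: "(real^'n::finite) measure" and f q :: "real^'n \<Rightarrow> real"
  assumes fin: "finite_measure \<tau>" "finite_measure \<mu>" "finite_measure \<nu>"
    and sets: "sets \<tau> = sets borel" "sets \<mu> = sets borel" "sets \<nu> = sets borel"
    and mass: "measure \<nu> (space \<nu>) = measure \<mu> (space \<mu>)" "measure \<mu> (space \<mu>) > 0"
    and A: "A \<in> sets borel" and f: "f \<in> borel_measurable borel"
    and q: "integrable \<mu> q" "integrable \<nu> q"
    and bound: "AE y in \<tau>. \<forall>x. \<bar>f (x + y)\<bar> \<le> q x"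
  shows "integrable (mixed_conv \<tau> A \<mu> \<nu>) f"
    and "integral\<^sup>L (mixed_conv \<tau> A \<mu> \<nu>) f =
      (\<integral>y. (if y \<in> A then \<integral>x. f (x + y) \<partial>\<nu> else \<integral>x. f (x + y) \<partial>\<mu>) \<partial>\<tau>)"
proof -
  define Q where "Q = density \<nu> (\<lambda>_. ennreal (1 / measure \<mu> (space \<mu>)))"
  define G where "G = (\<lambda>(y, x, x'). if y \<in> A then x' + y else x + y :: real^'n)"
  note R = has_bochner_integral_pair_normalized[OF fin(2,3) mass, folded Q_def]
  have G: "G \<in> \<tau> \<Otimes>\<^sub>M (\<mu> \<Otimes>\<^sub>M Q) \<rightarrow>\<^sub>M borel"
    unfolding G_def by (rule measurable_mixed_plus) (simp_all add: A sets Q_def)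
  have h: "integrable (\<mu> \<Otimes>\<^sub>M Q) (\<lambda>w. q (fst w) + q (snd w))"
    using R(2)[OF q(1)] R(3)[OF q(2)] by (auto intro: integrable.intros)
  have "AE y in \<tau>. \<forall>w\<in>space (\<mu> \<Otimes>\<^sub>M Q). \<bar>f (G (y, w))\<bar> \<le> q (fst w) + q (snd w)"
    using bound
  proof eventually_elim
    case (elim y)
    then have "q x \<ge> 0" for x
      using abs_ge_zero order_trans by blast
    with elim show ?case
      by (auto simp: G_def add_increasing add_increasing2)
  qed
  note * = integral_distr_pair_dominated[OF fin(1) R(1) G f h this]
  show "integrable (mixed_conv \<tau> A \<mu> \<nu>) f"
    using *(1) unfolding mixed_conv_def G_def Q_def .
  have inner: "AE y in \<tau>. (\<integral>w. f (G (y, w)) \<partial>(\<mu> \<Otimes>\<^sub>M Q)) =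
      (if y \<in> A then \<integral>x. f (x + y) \<partial>\<nu> else \<integral>x. f (x + y) \<partial>\<mu>)"
    using bound
  proof eventually_elim
    case (elim y)
    note translate = integrable_translate_dominated[OF _ f _ elim[rule_format]]
    show ?case
      using has_bochner_integral_integral_eq[OF R(2)[OF translate[OF sets(2) q(1)]]]
        has_bochner_integral_integral_eq[OF R(3)[OF translate[OF sets(3) q(2)]]]
      by (cases "y \<in> A") (simp_all add: G_def split_beta)
  qed
  have [measurable]: "A \<in> sets \<tau>"
    using A sets(1) by simp
  have [measurable]: "(\<lambda>y. \<integral>x. f (x + y) \<partial>\<mu>) \<in> borel_measurable \<tau>"
    using integral_conv(3)[OF fin(1,2) sets(1,2) f q(1) bound] by blast
  have [measurable]: "(\<lambda>y. \<integral>x. f (x + y) \<partial>\<nu>) \<in> borel_measurable \<tau>"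
    using integral_conv(3)[OF fin(1,3) sets(1,3) f q(2) bound] by blast
  have "integral\<^sup>L (mixed_conv \<tau> A \<mu> \<nu>) f = (\<integral>y. (\<integral>w. f (G (y, w)) \<partial>(\<mu> \<Otimes>\<^sub>M Q)) \<partial>\<tau>)"
    using *(2) unfolding mixed_conv_def G_def Q_def .
  also have "\<dots> = (\<integral>y. (if y \<in> A then \<integral>x. f (x + y) \<partial>\<nu> else \<integral>x. f (x + y) \<partial>\<mu>) \<partial>\<tau>)"
  proof (rule integral_cong_AE)
    show "(\<lambda>y. \<integral>w. f (G (y, w)) \<partial>(\<mu> \<Otimes>\<^sub>M Q)) \<in> borel_measurable \<tau>"
      using *(3) by blast
  qed (measurable, fact inner)
  finally show "integral\<^sup>L (mixed_conv \<tau> A \<mu> \<nu>) f =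
      (\<integral>y. (if y \<in> A then \<integral>x. f (x + y) \<partial>\<nu> else \<integral>x. f (x + y) \<partial>\<mu>) \<partial>\<tau>)" .
qed

lemma admissible_mixed_conv:
  fixes \<tau> \<mu> \<nu> :: "(real^'n::finite) measure"
  assumes \<mu>: "admissible \<mu>" and \<nu>: "admissible \<nu>"
    and moments: "\<And>p. polynomial_fun p \<Longrightarrow> integral\<^sup>L \<nu> p = integral\<^sup>L \<mu> p"
    and pos: "measure \<mu> (space \<mu>) > 0"
    and \<tau>: "radon \<tau>" "has_compact_support \<tau>" and A: "A \<in> sets borel"
  shows "admissible (mixed_conv \<tau> A \<mu> \<nu>)"
    and "\<And>p. polynomial_fun p \<Longrightarrow> integral\<^sup>L (mixed_conv \<tau> A \<mu> \<nu>) p = integral\<^sup>L (conv \<tau> \<mu>) p"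
proof -
  note fin = finite_measure_if_compact_support[OF \<tau>]
    finite_measure_if_admissible[OF \<mu>] finite_measure_if_admissible[OF \<nu>]
  have sets: "sets \<tau> = sets borel" "sets \<mu> = sets borel" "sets \<nu> = sets borel"
    using \<tau>(1) \<mu> \<nu> by (simp_all add: admissible_def radon_def)
  have mass: "measure \<nu> (space \<nu>) = measure \<mu> (space \<mu>)"
    using moments[OF polynomial_fun_const[of 1]] by simp
  have poly: "integrable (mixed_conv \<tau> A \<mu> \<nu>) p \<and>
      integral\<^sup>L (mixed_conv \<tau> A \<mu> \<nu>) p = integral\<^sup>L (conv \<tau> \<mu>) p" if p: "polynomial_fun p" for p
  proof -
    obtain q where q: "polynomial_fun q" "AE y in \<tau>. \<forall>x. \<bar>p (x + y)\<bar> \<le> q x"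
      using \<tau> p by (rule polynomial_translates_dominated)
    have q_int: "integrable \<mu> q" "integrable \<nu> q"
      using \<mu> \<nu> q(1) by (simp_all add: admissible_def)
    note mixed = integral_mixed_conv[OF fin sets mass pos A borel_measurable_polynomial_fun[OF p] q_int q(2)]
    note conv = integral_conv[OF fin(1,2) sets(1,2) borel_measurable_polynomial_fun[OF p] q_int(1) q(2)]
    have translate_eq: "(\<integral>x. p (x + y) \<partial>\<nu>) = (\<integral>x. p (x + y) \<partial>\<mu>)" for y
      using moments[OF polynomial_fun_translate[OF p]] .
    show ?thesis
      using mixed conv(2) unfolding translate_eq if_cancel by simp
  qed
  have "finite_measure (mixed_conv \<tau> A \<mu> \<nu>)"
    unfolding mixed_conv_def
    by (intro finite_measure.finite_measure_distr finite_measure_pair_measure fin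
        finite_measure_density_const measurable_mixed_plus) (simp_all add: sets A)
  then have "radon (mixed_conv \<tau> A \<mu> \<nu>)"
    by (rule radon_if_finite_measure) (simp add: mixed_conv_def)
  with poly show "admissible (mixed_conv \<tau> A \<mu> \<nu>)"
    unfolding admissible_def by blast
  from poly show "\<And>p. polynomial_fun p \<Longrightarrow> integral\<^sup>L (mixed_conv \<tau> A \<mu> \<nu>) p = integral\<^sup>L (conv \<tau> \<mu>) p"
    by blast
qed

section \<open>Bounded Lipschitz functions determine finite Borel measures\<close>

lemma lipschitz_on_min_one_infdist:
  "(real k)-lipschitz_on UNIV (\<lambda>x. min 1 (real k * infdist x S))"
proof (rule lipschitz_onI)
  fix a b
  have "dist (min 1 (real k * infdist a S)) (min 1 (real k * infdist b S))
      \<le> \<bar>real k * infdist a S - real k * infdist b S\<bar>"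
    by (simp add: dist_real_def min_def)
  also have "\<dots> \<le> real k * dist a b"
    using infdist_triangle_abs[of a S b]
    by (simp add: abs_mult right_diff_distrib[symmetric] mult_left_mono)
  finally show "dist (min 1 (real k * infdist a S)) (min 1 (real k * infdist b S)) \<le> real k * dist a b" .
qed simp

lemma tendsto_min_one_infdist:
  assumes "closed S" "S \<noteq> {}"
  shows "(\<lambda>k. min 1 (real k * infdist x S)) \<longlonglongrightarrow> indicator (- S) x"
proof (cases "x \<in> S")
  case False
  then have d: "infdist x S > 0"
    using assms by (intro infdist_pos_not_in_closed)
  obtain k0 :: nat where "1 / infdist x S \<le> real k0"
    using real_arch_simple by blast
  then have "min 1 (real k * infdist x S) = 1" if "k \<ge> k0" for k
    using d that by (simp add: field_simps min_def) (smt (verit) of_nat_mono mult_right_mono)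
  then have "eventually (\<lambda>k. min 1 (real k * infdist x S) = 1) sequentially"
    unfolding eventually_sequentially by blast
  with False show ?thesis
    by (simp add: tendsto_eventually)
qed simp

lemma tendsto_integral_min_one_infdist:
  fixes M :: "'a::metric_space measure"
  assumes "finite_measure M" "sets M = sets borel" "open U" "U \<noteq> UNIV"
  shows "(\<lambda>k. \<integral>x. min 1 (real k * infdist x (- U)) \<partial>M) \<longlonglongrightarrow> measure M U"
proof -
  interpret finite_measure M by fact
  have "(\<lambda>k. \<integral>x. min 1 (real k * infdist x (- U)) \<partial>M) \<longlonglongrightarrow> integral\<^sup>L M (indicator U)"
  proof (rule integral_dominated_convergence[where w="\<lambda>_. 1"])
    show "indicator U \<in> borel_measurable M"
      by (rule borel_measurable_indicator) (simp add: assms(2,3) borel_open)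
    show "(\<lambda>x. min 1 (real k * infdist x (- U))) \<in> borel_measurable M" for k
      unfolding measurable_cong_sets[OF assms(2) refl]
      by (intro borel_measurable_continuous_onI lipschitz_on_continuous_on[OF lipschitz_on_min_one_infdist])
    show "AE x in M. (\<lambda>k. min 1 (real k * infdist x (- U))) \<longlonglongrightarrow> indicator U x"
      using tendsto_min_one_infdist[of "- U"] assms(3,4) by auto
    show "AE x in M. norm (min 1 (real k * infdist x (- U))) \<le> 1" for k
      by (intro AE_I2) (simp add: infdist_nonneg)
  qed simp
  then show ?thesis
    using sets_eq_imp_space_eq[OF assms(2)] by simp
qed

lemma finite_measure_eqI_lipschitz:
  fixes \<mu> \<nu> :: "'a::metric_space measure"
  assumes fin: "finite_measure \<mu>" "finite_measure \<nu>"
    and sets: "sets \<mu> = sets borel" "sets \<nu> = sets borel"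
    and eq: "\<And>(g :: 'a \<Rightarrow> real) L. L-lipschitz_on UNIV g \<Longrightarrow> (\<And>x. \<bar>g x\<bar> \<le> 1) \<Longrightarrow>
      integral\<^sup>L \<mu> g = integral\<^sup>L \<nu> g"
  shows "\<mu> = \<nu>"
proof -
  have open_eq: "measure \<mu> U = measure \<nu> U" if "open U" for U
  proof (cases "U = UNIV")
    case True
    have "integral\<^sup>L \<mu> (\<lambda>_. 1::real) = integral\<^sup>L \<nu> (\<lambda>_. 1)"
      by (rule eq[of 0 "\<lambda>_. 1"]) (simp_all add: lipschitz_on_constant)
    with True sets show ?thesis
      by (simp add: sets_eq_imp_space_eq)
  next
    case False
    have "(\<integral>x. min 1 (real k * infdist x (- U)) \<partial>\<mu>) = (\<integral>x. min 1 (real k * infdist x (- U)) \<partial>\<nu>)" for k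
      by (rule eq[OF lipschitz_on_min_one_infdist]) (simp add: infdist_nonneg)
    then show ?thesis
      using LIMSEQ_unique[OF tendsto_integral_min_one_infdist[OF fin(1) sets(1) that False]]
        tendsto_integral_min_one_infdist[OF fin(2) sets(2) that False] by simp
  qed
  show ?thesis
  proof (rule measure_eqI_generator_eq[where E="{U. open U}" and \<Omega>=UNIV and A="\<lambda>_. UNIV"])
    show "emeasure \<mu> U = emeasure \<nu> U" if "U \<in> {U. open U}" for U
      using open_eq[of U] that sets
      by (simp add: finite_measure.emeasure_eq_measure[OF fin(1)] finite_measure.emeasure_eq_measure[OF fin(2)])
    show "emeasure \<mu> UNIV \<noteq> \<infinity>"
      using finite_measure.emeasure_finite[OF fin(1)] by simp
  qed (auto simp: Int_stable_def sets sets_borel)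
qed

lemma integral_translate_lipschitz:
  fixes g :: "'a::euclidean_space \<Rightarrow> real"
  assumes "finite_measure M" "sets M = sets borel" "L-lipschitz_on UNIV g" "\<And>x. \<bar>g x\<bar> \<le> B"
  shows "\<bar>(\<integral>x. g (x + a) \<partial>M) - (\<integral>x. g (x + b) \<partial>M)\<bar> \<le> L * measure M (space M) * dist a b"
proof -
  interpret finite_measure M by fact
  have [measurable]: "g \<in> borel_measurable borel"
    by (intro borel_measurable_continuous_onI lipschitz_on_continuous_on[OF assms(3)])
  have int: "integrable M (\<lambda>x. g (x + c))" for c
  proof (rule integrable_const_bound[where B=B])
    show "(\<lambda>x. g (x + c)) \<in> borel_measurable M"
      unfolding measurable_cong_sets[OF assms(2) refl] by measurable
  qed (use assms(4) in simp)
  have "\<bar>(\<integral>x. g (x + a) \<partial>M) - (\<integral>x. g (x + b) \<partial>M)\<bar> = \<bar>\<integral>x. g (x + a) - g (x + b) \<partial>M\<bar>"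
    using int by simp
  also have "\<dots> \<le> (\<integral>x. L * dist a b \<partial>M)"
  proof (rule integral_abs_bound_integral)
    show "\<bar>g (x + a) - g (x + b)\<bar> \<le> L * dist a b" for x
      using lipschitz_onD[OF assms(3), of "x + a" "x + b"] by (simp add: dist_real_def dist_norm)
  qed (use int in simp_all)
  also have "\<dots> = L * measure M (space M) * dist a b"
    by simp
  finally show ?thesis .
qed

section \<open>Localising the difference of two measures with equal moments\<close>

lemma abs_le_if_ball_integral_zero:
  fixes \<tau> :: "'a::metric_space measure" and D :: "'a \<Rightarrow> real"
  assumes "finite_measure \<tau>" "sets \<tau> = sets borel" "integrable \<tau> D" "r > 0"
    and pos: "emeasure \<tau> (ball y0 r) \<noteq> 0"
    and zero: "(\<integral>y. indicator (ball y0 r) y * D y \<partial>\<tau>) = 0"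
    and lip: "\<And>y. \<bar>D y - D y0\<bar> \<le> C * dist y y0"
  shows "\<bar>D y0\<bar> \<le> \<bar>C\<bar> * r"
proof -
  interpret finite_measure \<tau> by fact
  let ?B = "ball y0 r"
  have B: "?B \<in> sets \<tau>"
    using assms(2) by simp
  have int: "integrable \<tau> (\<lambda>y. indicator ?B y * D y)" "integrable \<tau> (\<lambda>y. indicator ?B y * c)" for c :: real
    using integrable_real_mult_indicator[OF B assms(3)] integrable_real_mult_indicator[OF B integrable_const]
    by (simp_all add: mult.commute)
  have "measure \<tau> ?B * \<bar>D y0\<bar> = \<bar>\<integral>y. indicator ?B y * (D y0 - D y) \<partial>\<tau>\<bar>"
    using int zero B by (simp add: right_diff_distrib abs_mult)
  also have "\<dots> \<le> (\<integral>y. \<bar>indicator ?B y * (D y0 - D y)\<bar> \<partial>\<tau>)"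
    using integral_norm_bound[of \<tau> "\<lambda>y. indicator ?B y * (D y0 - D y)"] by simp
  also have "\<dots> \<le> (\<integral>y. indicator ?B y * (\<bar>C\<bar> * r) \<partial>\<tau>)"
  proof (rule integral_mono)
    show "integrable \<tau> (\<lambda>y. \<bar>indicator ?B y * (D y0 - D y)\<bar>)"
      using int by (simp add: right_diff_distrib)
    show "\<bar>indicator ?B y * (D y0 - D y)\<bar> \<le> indicator ?B y * (\<bar>C\<bar> * r)" for y
    proof (cases "y \<in> ?B")
      case True
      have "\<bar>D y0 - D y\<bar> \<le> C * dist y y0"
        using lip[of y] by (simp add: abs_minus_commute)
      also have "\<dots> \<le> \<bar>C\<bar> * r"
        using True by (intro order_trans[OF abs_ge_self[of "C * dist y y0"]])
          (auto simp: abs_mult dist_commute intro: mult_left_mono)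
      finally show ?thesis
        using True by simp
    qed simp
  qed (rule int)
  also have "\<dots> = measure \<tau> ?B * (\<bar>C\<bar> * r)"
    using B by simp
  finally show ?thesis
    using pos by (simp add: emeasure_eq_measure zero_less_measure_iff)
qed

lemma zero_if_ball_integrals_zero:
  fixes \<tau> :: "'a::metric_space measure" and D :: "'a \<Rightarrow> real"
  assumes "finite_measure \<tau>" "sets \<tau> = sets borel" "integrable \<tau> D"
    and "\<And>r. r > 0 \<Longrightarrow> emeasure \<tau> (ball y0 r) \<noteq> 0"
    and "\<And>r. r > 0 \<Longrightarrow> (\<integral>y. indicator (ball y0 r) y * D y \<partial>\<tau>) = 0"
    and "\<And>y. \<bar>D y - D y0\<bar> \<le> C * dist y y0"
  shows "D y0 = 0"
proof (rule dense_eq0_I)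
  fix e :: real
  assume "e > 0"
  then have "\<bar>D y0\<bar> \<le> \<bar>C\<bar> * (e / (\<bar>C\<bar> + 1))"
    using assms by (intro abs_le_if_ball_integral_zero) auto
  also have "\<dots> \<le> e"
    using \<open>e > 0\<close> by (simp add: field_simps)
  finally show "\<bar>D y0\<bar> \<le> e" .
qed

lemma integral_diff_zero_if_mixed_conv_eq:
  fixes \<tau> \<mu> \<nu> :: "(real^'n::finite) measure" and f q :: "real^'n \<Rightarrow> real"
  assumes fin: "finite_measure \<tau>" "finite_measure \<mu>" "finite_measure \<nu>"
    and sets: "sets \<tau> = sets borel" "sets \<mu> = sets borel" "sets \<nu> = sets borel"
    and mass: "measure \<nu> (space \<nu>) = measure \<mu> (space \<mu>)" "measure \<mu> (space \<mu>) > 0"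
    and A: "A \<in> sets borel" and f: "f \<in> borel_measurable borel"
    and q: "integrable \<mu> q" "integrable \<nu> q"
    and bound: "AE y in \<tau>. \<forall>x. \<bar>f (x + y)\<bar> \<le> q x"
    and mixed: "mixed_conv \<tau> A \<mu> \<nu> = conv \<tau> \<mu>"
  shows "(\<integral>y. indicator A y * ((\<integral>x. f (x + y) \<partial>\<nu>) - (\<integral>x. f (x + y) \<partial>\<mu>)) \<partial>\<tau>) = 0"
proof -
  define H where "H M y = (\<integral>x. f (x + y) \<partial>M)" for M y
  have int: "integrable \<tau> (H \<mu>)" "integrable \<tau> (H \<nu>)"
    using integral_conv(3)[OF fin(1,2) sets(1,2) f q(1) bound]
      integral_conv(3)[OF fin(1,3) sets(1,3) f q(2) bound]
    by (simp_all add: H_def[abs_def])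
  have "integrable \<tau> (\<lambda>y. indicator A y * (H \<nu> y - H \<mu> y))"
    using integrable_real_mult_indicator[of A \<tau> "\<lambda>y. H \<nu> y - H \<mu> y"] int sets(1) A
    by (simp add: mult.commute)
  then have "(\<integral>y. H \<mu> y \<partial>\<tau>) + (\<integral>y. indicator A y * (H \<nu> y - H \<mu> y) \<partial>\<tau>)
      = (\<integral>y. H \<mu> y + indicator A y * (H \<nu> y - H \<mu> y) \<partial>\<tau>)"
    using int(1) by simp
  also have "\<dots> = (\<integral>y. (if y \<in> A then H \<nu> y else H \<mu> y) \<partial>\<tau>)"
    by (rule Bochner_Integration.integral_cong) (simp_all add: indicator_def)
  also have "\<dots> = integral\<^sup>L (conv \<tau> \<mu>) f"
    using integral_mixed_conv(2)[OF fin sets mass A f q bound] mixed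
    unfolding H_def by simp
  also have "\<dots> = (\<integral>y. H \<mu> y \<partial>\<tau>)"
    using integral_conv(2)[OF fin(1,2) sets(1,2) f q(1) bound] by (simp add: H_def)
  finally show ?thesis
    by (simp add: H_def)
qed

lemma eq_if_mixed_conv_eq:
  fixes \<tau> \<mu> \<nu> :: "(real^'n::finite) measure"
  assumes fin: "finite_measure \<tau>" "finite_measure \<mu>" "finite_measure \<nu>"
    and sets: "sets \<tau> = sets borel" "sets \<mu> = sets borel" "sets \<nu> = sets borel"
    and mass: "measure \<nu> (space \<nu>) = measure \<mu> (space \<mu>)" "measure \<mu> (space \<mu>) > 0"
    and y0: "\<And>r. r > 0 \<Longrightarrow> emeasure \<tau> (ball y0 r) \<noteq> 0"
    and mixed: "\<And>r. r > 0 \<Longrightarrow> mixed_conv \<tau> (ball y0 r) \<mu> \<nu> = conv \<tau> \<mu>"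
  shows "\<mu> = \<nu>"
proof (rule finite_measure_eqI_lipschitz[OF fin(2,3) sets(2,3)])
  fix g :: "real^'n \<Rightarrow> real" and L
  assume g: "L-lipschitz_on UNIV g" "\<And>x. \<bar>g x\<bar> \<le> 1"
  define D where "D y = (\<integral>x. g (x + (y - y0)) \<partial>\<nu>) - (\<integral>x. g (x + (y - y0)) \<partial>\<mu>)" for y
  have [measurable]: "g \<in> borel_measurable borel"
    by (intro borel_measurable_continuous_onI lipschitz_on_continuous_on[OF g(1)])
  have f: "(\<lambda>z. g (z - y0)) \<in> borel_measurable borel"
    by measurable
  have bound: "AE y in \<tau>. \<forall>x. \<bar>g (x + y - y0)\<bar> \<le> 1"
    using g(2) by simp
  have one: "integrable \<mu> (\<lambda>_. 1::real)" "integrable \<nu> (\<lambda>_. 1::real)"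
    using fin(2,3) by (simp_all add: finite_measure.integrable_const)
  have "D y0 = 0"
  proof (rule zero_if_ball_integrals_zero[OF fin(1) sets(1), where C="2 * L * measure \<mu> (space \<mu>)"])
    show "integrable \<tau> D"
      using integral_conv(3)[OF fin(1,2) sets(1,2) f one(1) bound]
        integral_conv(3)[OF fin(1,3) sets(1,3) f one(2) bound]
      by (simp add: D_def[abs_def] add_diff_eq)
    show "(\<integral>y. indicator (ball y0 r) y * D y \<partial>\<tau>) = 0" if "r > 0" for r
      using integral_diff_zero_if_mixed_conv_eq[OF fin sets mass _ f one bound mixed[OF that]]
      by (simp add: D_def add_diff_eq)
    show "\<bar>D y - D y0\<bar> \<le> 2 * L * measure \<mu> (space \<mu>) * dist y y0" for y
      using integral_translate_lipschitz[OF fin(2) sets(2) g, of "y - y0" 0]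
        integral_translate_lipschitz[OF fin(3) sets(3) g, of "y - y0" 0] mass(1)
      by (simp add: D_def dist_norm)
  qed (fact y0)
  then show "integral\<^sup>L \<mu> g = integral\<^sup>L \<nu> g"
    by (simp add: D_def)
qed

theorem mainTheorem15:
  fixes \<mu> \<tau> :: "(real^'n::finite) measure"
  assumes "indeterminate \<mu>"
    and "radon \<tau>"
    and "has_compact_support \<tau>"
    and "emeasure \<tau> (space \<tau>) \<noteq> 0"
  shows "admissible (conv \<tau> \<mu>) \<and> indeterminate (conv \<tau> \<mu>)"
proof -
  obtain \<nu> where \<mu>: "admissible \<mu>" and \<nu>: "admissible \<nu>" "\<nu> \<noteq> \<mu>"
    and moments: "\<And>p. polynomial_fun p \<Longrightarrow> integral\<^sup>L \<nu> p = integral\<^sup>L \<mu> p"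
    using assms(1) unfolding indeterminate_def by blast
  note fin = finite_measure_if_compact_support[OF assms(2,3)]
    finite_measure_if_admissible[OF \<mu>] finite_measure_if_admissible[OF \<nu>(1)]
  have sets: "sets \<tau> = sets borel" "sets \<mu> = sets borel" "sets \<nu> = sets borel"
    using assms(2) \<mu> \<nu>(1) by (simp_all add: admissible_def radon_def)
  have mass: "measure \<nu> (space \<nu>) = measure \<mu> (space \<mu>)"
    using moments[OF polynomial_fun_const[of 1]] by simp
  have pos: "measure \<mu> (space \<mu>) > 0"
    by (rule measure_space_pos_if_neq[OF fin(2,3) _ mass \<nu>(2)[symmetric]]) (simp add: sets)
  obtain K where "compact K" "AE y in \<tau>. y \<in> K"
    using assms(2,3) by (rule compact_supportE)
  then obtain y0 where y0: "\<And>r. r > 0 \<Longrightarrow> emeasure \<tau> (ball y0 r) \<noteq> 0"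
    using support_pointE[OF sets(1) _ _ assms(4)] by blast
  have conv: "admissible (conv \<tau> \<mu>)"
    using \<mu> assms(2,3) by (rule admissible_conv)
  have "indeterminate (conv \<tau> \<mu>)"
  proof (rule ccontr)
    assume "\<not> indeterminate (conv \<tau> \<mu>)"
    then have "mixed_conv \<tau> (ball y0 r) \<mu> \<nu> = conv \<tau> \<mu>" if "r > 0" for r
      using conv admissible_mixed_conv[OF \<mu> \<nu>(1) moments pos assms(2,3), of "ball y0 r"]
      unfolding indeterminate_def by auto
    with \<nu>(2) show False
      using eq_if_mixed_conv_eq[OF fin sets mass pos y0] by blast
  qed
  with conv show ?thesis by blast
qed

end
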